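(* In the worst case, the number of rounds until the myopic best-response dynamics described below converge is $\Omega(n)$: there is a constant $c>0$ such that for every $n$ there is an instance with $n$ users (nonnegative embedding weights, features, linear threshold classifier, scaled 2-norm cost) for which the dynamics require at least $cn$ rounds to converge.
   Context: Users $i$ have features $x_i\in\mathbb{R}^\ell$; embeddings $\phi(x_i;x_{-i})=\widetilde{w}_{ii}x_i+\sum_{j\neq i}\widetilde{w}_{ji}x_j$ with $\widetilde{w}_{ji}\ge0$. Classifier: $h_{\theta,b}(x_i;x_{-i})=\mathrm{sign}(\theta^\top\phi(x_i;x_{-i})+b)$, $\mathrm{sign}(0)=+1$. Cost $c_\beta(x,x')=\beta\|x-x'\|_2$, $\beta>0$. Dynamics: $x_i^{(0)}=x_i$; at each round all users update concurrently; user $i$ changes her features only if she is currently classified $-1$ and some $x'$ with $h(x';x_{-i})=+1$ (others' current features) has cost $\le2$ from her current features, in which case she moves to the minimum-cost such point; otherwise she stays. Convergence means reaching a round after which no user's features change. *)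

theory Defs
  imports Complex_Main
begin

text \<open>Vectors in R^l are represented as functions nat => real vanishing at
indices >= l. Users are indexed by 0..<n. A configuration X maps a user
to her current feature vector. W j i is the embedding weight w~_ji.\<close>

definition vecs :: "nat \<Rightarrow> (nat \<Rightarrow> real) set" where
  "vecs l = {v. \<forall>k\<ge>l. v k = 0}"

definition embed :: "nat \<Rightarrow> (nat \<Rightarrow> nat \<Rightarrow> real) \<Rightarrow> (nat \<Rightarrow> nat \<Rightarrow> real) \<Rightarrow> nat \<Rightarrow> (nat \<Rightarrow> real)" where
  "embed n W X i = (\<lambda>k. \<Sum>j<n. W j i * X j k)"

text \<open>Classified +1 iff theta^T phi + b >= 0 (sign 0 = +1).\<close>
definition positive :: "nat \<Rightarrow> nat \<Rightarrow> (nat \<Rightarrow> nat \<Rightarrow> real) \<Rightarrow> (nat \<Rightarrow> real) \<Rightarrow> real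
    \<Rightarrow> (nat \<Rightarrow> nat \<Rightarrow> real) \<Rightarrow> nat \<Rightarrow> bool" where
  "positive l n W \<theta> b X i \<longleftrightarrow> (\<Sum>k<l. \<theta> k * embed n W X i k) + b \<ge> 0"

definition cost :: "nat \<Rightarrow> real \<Rightarrow> (nat \<Rightarrow> real) \<Rightarrow> (nat \<Rightarrow> real) \<Rightarrow> real" where
  "cost l \<beta> x y = \<beta> * sqrt (\<Sum>k<l. (x k - y k)^2)"

definition feasible :: "nat \<Rightarrow> nat \<Rightarrow> (nat \<Rightarrow> nat \<Rightarrow> real) \<Rightarrow> (nat \<Rightarrow> real) \<Rightarrow> real
    \<Rightarrow> (nat \<Rightarrow> nat \<Rightarrow> real) \<Rightarrow> nat \<Rightarrow> (nat \<Rightarrow> real) \<Rightarrow> bool" where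
  "feasible l n W \<theta> b X i x' \<longleftrightarrow> x' \<in> vecs l \<and> positive l n W \<theta> b (X(i := x')) i"

definition br_step :: "nat \<Rightarrow> nat \<Rightarrow> (nat \<Rightarrow> nat \<Rightarrow> real) \<Rightarrow> (nat \<Rightarrow> real) \<Rightarrow> real \<Rightarrow> real
    \<Rightarrow> (nat \<Rightarrow> nat \<Rightarrow> real) \<Rightarrow> (nat \<Rightarrow> nat \<Rightarrow> real) \<Rightarrow> bool" where
  "br_step l n W \<theta> b \<beta> X Y \<longleftrightarrow>
     (\<forall>i. i \<ge> n \<longrightarrow> Y i = X i) \<and>
     (\<forall>i<n.
        if \<not> positive l n W \<theta> b X i \<and>
           (\<exists>x'. feasible l n W \<theta> b X i x' \<and> cost l \<beta> (X i) x' \<le> 2)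
        then is_arg_min (cost l \<beta> (X i)) (feasible l n W \<theta> b X i) (Y i)
        else Y i = X i)"

definition trajectory :: "nat \<Rightarrow> nat \<Rightarrow> (nat \<Rightarrow> nat \<Rightarrow> real) \<Rightarrow> (nat \<Rightarrow> real) \<Rightarrow> real \<Rightarrow> real
    \<Rightarrow> (nat \<Rightarrow> nat \<Rightarrow> real) \<Rightarrow> (nat \<Rightarrow> nat \<Rightarrow> nat \<Rightarrow> real) \<Rightarrow> bool" where
  "trajectory l n W \<theta> b \<beta> X0 Xs \<longleftrightarrow>
     Xs 0 = X0 \<and> (\<forall>t. br_step l n W \<theta> b \<beta> (Xs t) (Xs (Suc t)))"

definition converged_at :: "nat \<Rightarrow> (nat \<Rightarrow> nat \<Rightarrow> nat \<Rightarrow> real) \<Rightarrow> nat \<Rightarrow> bool" where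
  "converged_at n Xs T \<longleftrightarrow> (\<forall>t\<ge>T. \<forall>i<n. Xs (Suc t) i = Xs t i)"

end

theory Submission
  imports Defs
begin

text \<open>Users form a path: user i's embedding is x_i + x_(i-1), the classifier is
sign(phi), all features start at -2 and the cost is the distance. User 0 sees
embedding -2 and moves to 0 at cost exactly 2; every other user sees -4, which
would cost 4 to fix, until her predecessor has moved to 0. Hence in round t
exactly user t moves, and the dynamics need exactly n rounds.\<close>

declare One_nat_def [simp del]

definition responds :: "nat \<Rightarrow> nat \<Rightarrow> (nat \<Rightarrow> nat \<Rightarrow> real) \<Rightarrow> (nat \<Rightarrow> real) \<Rightarrow> real \<Rightarrow> real
    \<Rightarrow> (nat \<Rightarrow> nat \<Rightarrow> real) \<Rightarrow> nat \<Rightarrow> (nat \<Rightarrow> real) \<Rightarrow> bool" where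
  "responds l n W \<theta> b \<beta> X i y \<longleftrightarrow>
     (if \<not> positive l n W \<theta> b X i \<and>
         (\<exists>x'. feasible l n W \<theta> b X i x' \<and> cost l \<beta> (X i) x' \<le> 2)
      then is_arg_min (cost l \<beta> (X i)) (feasible l n W \<theta> b X i) y
      else y = X i)"

lemma br_step_iff_responds:
  "br_step l n W \<theta> b \<beta> X Y \<longleftrightarrow>
     (\<forall>i\<ge>n. Y i = X i) \<and> (\<forall>i<n. responds l n W \<theta> b \<beta> X i (Y i))"
  by (simp add: br_step_def responds_def)

lemma trajectory_eq_if_br_step_deterministic:
  assumes "\<And>t Y. br_step l n W \<theta> b \<beta> (Z t) Y \<longleftrightarrow> Y = Z (Suc t)"
  shows "trajectory l n W \<theta> b \<beta> (Z 0) Xs \<longleftrightarrow> Xs = Z"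
proof
  assume traj: "trajectory l n W \<theta> b \<beta> (Z 0) Xs"
  have "Xs t = Z t" for t
  proof (induction t)
    case 0
    then show ?case using traj by (simp add: trajectory_def)
  next
    case (Suc t)
    then show ?case using traj assms by (metis trajectory_def)
  qed
  then show "Xs = Z" by blast
next
  assume "Xs = Z"
  then show "trajectory l n W \<theta> b \<beta> (Z 0) Xs"
    using assms by (simp add: trajectory_def)
qed

definition axis_vec :: "real \<Rightarrow> nat \<Rightarrow> real" where
  "axis_vec a = (\<lambda>k. if k = 0 then a else 0)"

lemma axis_vec_0: "axis_vec 0 = (\<lambda>_. 0)"
  by (simp add: axis_vec_def)

lemma axis_vec_apply_0 [simp]: "axis_vec a 0 = a"
  by (simp add: axis_vec_def)

lemma axis_vec_in_vecs [simp]: "axis_vec a \<in> vecs l \<longleftrightarrow> a = 0 \<or> l \<ge> 1"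
  by (auto simp: axis_vec_def vecs_def fun_eq_iff)

lemma axis_vec_inject [simp]: "axis_vec a = axis_vec a' \<longleftrightarrow> a = a'"
  by (metis axis_vec_apply_0)

lemma vecs_1_iff: "v \<in> vecs 1 \<longleftrightarrow> v = axis_vec (v 0)"
  by (auto simp: vecs_def axis_vec_def fun_eq_iff)

lemma cost_1: "cost 1 \<beta> x y = \<beta> * \<bar>x 0 - y 0\<bar>"
  by (simp add: cost_def One_nat_def)

lemma positive_1_axis_vec:
  "positive 1 n W (axis_vec 1) b X i \<longleftrightarrow> embed n W X i 0 + b \<ge> 0"
  by (simp add: positive_def One_nat_def)

definition chain_weights :: "nat \<Rightarrow> nat \<Rightarrow> real" where
  "chain_weights j i = (if j = i \<or> Suc j = i then 1 else 0)"

lemma embed_chain_weights: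
  assumes "i < n"
  shows "embed n chain_weights X i k = X i k + (if 0 < i then X (i - 1) k else 0)"
proof -
  have "(\<Sum>j<n. chain_weights j i * X j k) =
        (\<Sum>j<n. (if j = i then X j k else 0) + (if j = i - 1 \<and> 0 < i then X j k else 0))"
    by (rule sum.cong) (auto simp: chain_weights_def)
  also have "\<dots> = X i k + (if 0 < i then X (i - 1) k else 0)"
    using assms by (simp add: sum.distrib sum.If_cases)
  finally show ?thesis
    by (simp add: embed_def)
qed

lemma is_arg_min_cost_1_halfline:
  assumes "\<beta> > 0" and "x 0 \<le> a"
  shows "is_arg_min (cost 1 \<beta> x) (\<lambda>y. y \<in> vecs 1 \<and> a \<le> y 0) y \<longleftrightarrow> y = axis_vec a"
proof
  assume min: "is_arg_min (cost 1 \<beta> x) (\<lambda>y. y \<in> vecs 1 \<and> a \<le> y 0) y"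
  then have y: "y \<in> vecs 1" "a \<le> y 0"
    by (auto simp: is_arg_min_def)
  from min have "\<not> cost 1 \<beta> x (axis_vec a) < cost 1 \<beta> x y"
    by (auto simp: is_arg_min_def)
  then have "y 0 = a"
    using assms y by (auto simp: cost_1 mult_less_cancel_left_pos)
  then show "y = axis_vec a"
    using y vecs_1_iff by metis
next
  assume "y = axis_vec a"
  then show "is_arg_min (cost 1 \<beta> x) (\<lambda>y. y \<in> vecs 1 \<and> a \<le> y 0) y"
    using assms by (auto simp: is_arg_min_def cost_1 abs_if mult_less_cancel_left_pos)
qed

lemma responds_chain:
  assumes "i < n" and "X i \<in> vecs 1"
  defines "p \<equiv> if 0 < i then X (i - 1) 0 else 0"
  shows "responds 1 n chain_weights (axis_vec 1) 0 1 X i y \<longleftrightarrow>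
         y = (if X i 0 + p < 0 \<and> - p - X i 0 \<le> 2 then axis_vec (- p) else X i)"
proof -
  have pos: "positive 1 n chain_weights (axis_vec 1) 0 X i \<longleftrightarrow> 0 \<le> X i 0 + p"
    using assms by (simp add: positive_1_axis_vec embed_chain_weights)
  have feas: "feasible 1 n chain_weights (axis_vec 1) 0 X i = (\<lambda>x'. x' \<in> vecs 1 \<and> - p \<le> x' 0)"
    using assms by (auto simp: fun_eq_iff feasible_def positive_1_axis_vec embed_chain_weights)
  show ?thesis
  proof (cases "0 \<le> X i 0 + p")
    case True
    then show ?thesis
      using pos by (simp add: responds_def)
  next
    case False
    have reachable: "(\<exists>x'. x' \<in> vecs 1 \<and> - p \<le> x' 0 \<and> cost 1 1 (X i) x' \<le> 2) \<longleftrightarrow> - p - X i 0 \<le> 2"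
    proof
      assume "\<exists>x'. x' \<in> vecs 1 \<and> - p \<le> x' 0 \<and> cost 1 1 (X i) x' \<le> 2"
      then show "- p - X i 0 \<le> 2"
        by (auto simp: cost_1)
    next
      assume "- p - X i 0 \<le> 2"
      then show "\<exists>x'. x' \<in> vecs 1 \<and> - p \<le> x' 0 \<and> cost 1 1 (X i) x' \<le> 2"
        using False by (intro exI[of _ "axis_vec (- p)"]) (simp add: cost_1)
    qed
    show ?thesis
      using False pos reachable is_arg_min_cost_1_halfline[of 1 "X i" "- p" y]
      by (auto simp: responds_def feas)
  qed
qed

definition domino :: "nat \<Rightarrow> nat \<Rightarrow> nat \<Rightarrow> nat \<Rightarrow> real" where
  "domino n t i = (if t \<le> i \<and> i < n then axis_vec (-2) else axis_vec 0)"

lemma responds_domino: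
  assumes "i < n"
  shows "responds 1 n chain_weights (axis_vec 1) 0 1 (domino n t) i y \<longleftrightarrow> y = domino n (Suc t) i"
proof -
  have "domino n t i \<in> vecs 1"
    by (simp add: domino_def)
  from responds_chain[of i n "domino n t", OF assms this] show ?thesis
    using assms by (cases "i = t") (auto simp: domino_def)
qed

lemma br_step_domino:
  "br_step 1 n chain_weights (axis_vec 1) 0 1 (domino n t) Y \<longleftrightarrow> Y = domino n (Suc t)"
proof -
  have "\<forall>i\<ge>n. domino n (Suc t) i = domino n t i"
    by (simp add: domino_def)
  then show ?thesis
    by (auto simp: br_step_iff_responds responds_domino fun_eq_iff) (metis not_le)
qed

lemma converged_at_domino_iff: "converged_at n (domino n) T \<longleftrightarrow> n \<le> T"
proof
  assume "converged_at n (domino n) T"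
  then have "T < n \<Longrightarrow> domino n (Suc T) T = domino n T T"
    by (simp add: converged_at_def)
  then show "n \<le> T"
    by (cases "T < n") (auto simp: domino_def)
next
  assume "n \<le> T"
  then show "converged_at n (domino n) T"
    by (simp add: converged_at_def domino_def)
qed

lemma trajectory_domino_iff:
  "trajectory 1 n chain_weights (axis_vec 1) 0 1 (domino n 0) Xs \<longleftrightarrow> Xs = domino n"
  by (rule trajectory_eq_if_br_step_deterministic) (rule br_step_domino)

theorem corollary2:
  shows "\<exists>c::real. c > 0 \<and> (\<forall>n::nat. \<exists>l::nat. \<exists>W \<theta> b \<beta> X0.
     l \<ge> 1 \<and> \<beta> > 0 \<and> (\<forall>i j. W j i \<ge> 0) \<and> \<theta> \<in> vecs l \<and>
     (\<forall>i<n. X0 i \<in> vecs l) \<and> (\<forall>i\<ge>n. X0 i = (\<lambda>_. 0)) \<and>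
     (\<exists>Xs. trajectory l n W \<theta> b \<beta> X0 Xs) \<and>
     (\<forall>Xs. trajectory l n W \<theta> b \<beta> X0 Xs \<longrightarrow>
        (\<exists>T. converged_at n Xs T) \<and>
        (\<forall>T. converged_at n Xs T \<longrightarrow> real T \<ge> c * real n)))"
  apply (rule exI[of _ 1], intro conjI allI)
   apply simp
  subgoal for n
    apply (rule exI[of _ 1], rule exI[of _ chain_weights], rule exI[of _ "axis_vec 1"],
        rule exI[of _ 0], rule exI[of _ 1], rule exI[of _ "domino n 0"])
    by (auto simp: trajectory_domino_iff converged_at_domino_iff chain_weights_def domino_def
        axis_vec_0)
  done

end
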